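(* Let $G=(V,E)$ be a planar graph with a fixed planar embedding, let $c,\delta,\varepsilon\in(0,1)$, let $k\ge1$ be an integer, and let $\ell\ge 2k^2+2k\delta^{-1}+2\varepsilon^{-1}-1$ be an integer. Then for any $c$-maximum independent sets $S_1,\dots,S_k$ of $G$ there exists $p\in\{0,\dots,\ell\}$ such that simultaneously (i) $|S_h\cap L^p|\le(\delta/2)|S_h|$ for all $h\in[k]$; (ii) $\sum_{i\ne j}|(S_i\cap L^p)\Delta(S_j\cap L^p)|\le(\varepsilon/2)\sum_{i\ne j}|S_i\Delta S_j|$; and (iii) $|(S_i\cap L^p)\Delta(S_j\cap L^p)|\le\frac12|S_i\Delta S_j|$ for every $i\ne j$. Consequently, if moreover $|S_i\Delta S_j|\ge 2$ for all $i\ne j$, then the sets $S_i\setminus L^p$, $i\in[k]$, are pairwise distinct.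
   Context: Levels of vertices of an embedded planar graph: a vertex is at level 1 if it lies on the exterior face; inductively, vertices on the exterior face of the graph obtained after deleting all vertices of levels $1,\dots,i-1$ are at level $i$. For an integer $\ell\ge 0$ and $p\in\{0,\dots,\ell\}$, the $p$-th stratum $L^p$ is the set of vertices whose level is congruent to $p$ modulo $\ell+1$. A $c$-maximum independent set is an independent set $S$ with $|S|\ge c$ times the maximum size of an independent set of $G$. *)

theory Defs
  imports "HOL-Analysis.Analysis"
begin

definition simple_graph :: "'v set \<Rightarrow> 'v set set \<Rightarrow> bool" where
  "simple_graph V E \<longleftrightarrow> finite V \<and> (\<forall>e\<in>E. e \<subseteq> V \<and> card e = 2)"

definition indep_set :: "'v set \<Rightarrow> 'v set set \<Rightarrow> 'v set \<Rightarrow> bool" where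
  "indep_set V E S \<longleftrightarrow> S \<subseteq> V \<and> (\<forall>e\<in>E. \<not> e \<subseteq> S)"

definition max_indep_size :: "'v set \<Rightarrow> 'v set set \<Rightarrow> nat" where
  "max_indep_size V E = Max (card ` {S. indep_set V E S})"

definition c_max_indep :: "'v set \<Rightarrow> 'v set set \<Rightarrow> real \<Rightarrow> 'v set \<Rightarrow> bool" where
  "c_max_indep V E c S \<longleftrightarrow> indep_set V E S \<and> real (card S) \<ge> c * real (max_indep_size V E)"

definition plane_embedding ::
  "'v set \<Rightarrow> 'v set set \<Rightarrow> ('v \<Rightarrow> complex) \<Rightarrow> ('v set \<Rightarrow> real \<Rightarrow> complex) \<Rightarrow> bool" where
  "plane_embedding V E pos \<gamma> \<longleftrightarrow>
     inj_on pos V \<and>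
     (\<forall>e\<in>E. arc (\<gamma> e) \<and> {pathstart (\<gamma> e), pathfinish (\<gamma> e)} = pos ` e \<and>
             path_image (\<gamma> e) \<inter> pos ` V = pos ` e) \<and>
     (\<forall>e\<in>E. \<forall>f\<in>E. e \<noteq> f \<longrightarrow> path_image (\<gamma> e) \<inter> path_image (\<gamma> f) \<subseteq> pos ` (e \<inter> f))"

definition drawing ::
  "'v set set \<Rightarrow> ('v \<Rightarrow> complex) \<Rightarrow> ('v set \<Rightarrow> real \<Rightarrow> complex) \<Rightarrow> 'v set \<Rightarrow> complex set" where
  "drawing E pos \<gamma> W = pos ` W \<union> (\<Union>e\<in>{e\<in>E. e \<subseteq> W}. path_image (\<gamma> e))"

definition outer_face ::
  "'v set set \<Rightarrow> ('v \<Rightarrow> complex) \<Rightarrow> ('v set \<Rightarrow> real \<Rightarrow> complex) \<Rightarrow> 'v set \<Rightarrow> complex set" where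
  "outer_face E pos \<gamma> W =
     {x. x \<notin> drawing E pos \<gamma> W \<and> \<not> bounded (connected_component_set (- drawing E pos \<gamma> W) x)}"

definition on_outer ::
  "'v set set \<Rightarrow> ('v \<Rightarrow> complex) \<Rightarrow> ('v set \<Rightarrow> real \<Rightarrow> complex) \<Rightarrow> 'v set \<Rightarrow> 'v set" where
  "on_outer E pos \<gamma> W = {v\<in>W. pos v \<in> closure (outer_face E pos \<gamma> W)}"

text \<open>remaining i = vertices of level > i.\<close>
primrec remaining ::
  "'v set \<Rightarrow> 'v set set \<Rightarrow> ('v \<Rightarrow> complex) \<Rightarrow> ('v set \<Rightarrow> real \<Rightarrow> complex) \<Rightarrow> nat \<Rightarrow> 'v set" where
  "remaining V E pos \<gamma> 0 = V"
| "remaining V E pos \<gamma> (Suc i) =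
     remaining V E pos \<gamma> i - on_outer E pos \<gamma> (remaining V E pos \<gamma> i)"

definition level_set ::
  "'v set \<Rightarrow> 'v set set \<Rightarrow> ('v \<Rightarrow> complex) \<Rightarrow> ('v set \<Rightarrow> real \<Rightarrow> complex) \<Rightarrow> nat \<Rightarrow> 'v set" where
  "level_set V E pos \<gamma> j =
     (if j = 0 then {} else on_outer E pos \<gamma> (remaining V E pos \<gamma> (j - 1)))"

definition stratum ::
  "'v set \<Rightarrow> 'v set set \<Rightarrow> ('v \<Rightarrow> complex) \<Rightarrow> ('v set \<Rightarrow> real \<Rightarrow> complex) \<Rightarrow> nat \<Rightarrow> nat \<Rightarrow> 'v set" where
  "stratum V E pos \<gamma> l p = {v. \<exists>j\<ge>1. v \<in> level_set V E pos \<gamma> j \<and> j mod (l + 1) = p}"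

definition symdiff :: "'a set \<Rightarrow> 'a set \<Rightarrow> 'a set" where
  "symdiff A B = (A - B) \<union> (B - A)"

end

theory Submission
  imports Defs
begin

text \<open>Distinct levels are disjoint, hence so are the strata. Every vertex set therefore
spreads its size over the \<open>l + 1\<close> strata. Normalising each of the \<open>k + 1 + k(k - 1)\<close>
required inequalities by its allowance, the normalised excesses of a stratum sum over all
strata to at most \<open>2k/\<delta> + 2/\<epsilon> + 2k(k - 1) < l + 1\<close>, so some stratum has total
normalised excess below 1 and satisfies all inequalities at once. The planar embedding
only serves to define the levels; c-maximality is only used for finiteness.\<close>

lemma remaining_antimono:
  "i \<le> j \<Longrightarrow> remaining V E pos \<gamma> j \<subseteq> remaining V E pos \<gamma> i"
  by (induction rule: dec_induct) auto

lemma level_set_subset_remaining: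
  "1 \<le> j \<Longrightarrow> level_set V E pos \<gamma> j \<subseteq> remaining V E pos \<gamma> (j - 1)"
  by (auto simp: level_set_def on_outer_def)

lemma level_set_disjoint_remaining:
  "level_set V E pos \<gamma> j \<inter> remaining V E pos \<gamma> j = {}"
  by (cases j) (auto simp: level_set_def)

lemma disjoint_family_level_set: "disjoint_family (level_set V E pos \<gamma>)"
proof -
  have "level_set V E pos \<gamma> i \<inter> level_set V E pos \<gamma> j = {}" if "i < j" for i j
  proof (cases "i = 0")
    case False
    have "level_set V E pos \<gamma> j \<subseteq> remaining V E pos \<gamma> (j - 1)"
      using \<open>i < j\<close> by (intro level_set_subset_remaining) simp
    also have "\<dots> \<subseteq> remaining V E pos \<gamma> i"
      using \<open>i < j\<close> by (intro remaining_antimono) simp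
    finally have "level_set V E pos \<gamma> j \<subseteq> remaining V E pos \<gamma> i" .
    then show ?thesis using level_set_disjoint_remaining[of V E pos \<gamma> i] by blast
  qed (simp add: level_set_def)
  then show ?thesis
    unfolding disjoint_family_on_def by (metis Int_commute linorder_neqE_nat)
qed

lemma disjoint_family_stratum: "disjoint_family (stratum V E pos \<gamma> l)"
proof -
  have "p = q" if v: "v \<in> stratum V E pos \<gamma> l p" "v \<in> stratum V E pos \<gamma> l q" for v p q
  proof -
    obtain i j where "v \<in> level_set V E pos \<gamma> i" "i mod (l + 1) = p"
      "v \<in> level_set V E pos \<gamma> j" "j mod (l + 1) = q"
      using v unfolding stratum_def by blast
    moreover from this have "i = j"
      using disjoint_family_level_set[of V E pos \<gamma>] unfolding disjoint_family_on_def by blast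
    ultimately show ?thesis by simp
  qed
  then show ?thesis unfolding disjoint_family_on_def by blast
qed

lemma sum_card_Int_disjoint_family_le:
  assumes "finite A" "finite P" "disjoint_family_on L P"
  shows "(\<Sum>p\<in>P. card (A \<inter> L p)) \<le> card A"
proof -
  have "(\<Sum>p\<in>P. card (A \<inter> L p)) = card (\<Union>p\<in>P. A \<inter> L p)"
    using assms by (intro card_UN_disjoint' [symmetric]) (auto simp: disjoint_family_on_def)
  also have "\<dots> \<le> card A"
    using assms(1) by (intro card_mono) auto
  finally show ?thesis .
qed

lemma exists_index_within_budgets:
  fixes x :: "'q \<Rightarrow> 'p \<Rightarrow> real" and B t :: "'q \<Rightarrow> real"
  assumes "finite Q" "finite P"
    and nonneg: "\<And>q p. q \<in> Q \<Longrightarrow> p \<in> P \<Longrightarrow> 0 \<le> x q p"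
    and budget: "\<And>q. q \<in> Q \<Longrightarrow> (\<Sum>p\<in>P. x q p) \<le> B q"
    and t: "\<And>q. q \<in> Q \<Longrightarrow> 0 < t q"
    and few: "(\<Sum>q\<in>Q. 1 / t q) < real (card P)"
  shows "\<exists>p\<in>P. \<forall>q\<in>Q. x q p \<le> t q * B q"
proof -
  \<comment> \<open>Terms with \<open>B q = 0\<close> vanish by \<open>x / 0 = 0\<close>; there \<open>x q p = 0\<close> anyway.\<close>
  define excess where "excess p = (\<Sum>q\<in>Q. x q p / (t q * B q))" for p
  have B: "0 \<le> B q" if "q \<in> Q" for q
    using budget[OF that] sum_nonneg[of P "x q"] nonneg[OF that] by fastforce
  have "(\<Sum>p\<in>P. excess p) = (\<Sum>q\<in>Q. (\<Sum>p\<in>P. x q p) / (t q * B q))"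
    unfolding excess_def by (simp add: sum.swap[of _ P] sum_divide_distrib)
  also have "\<dots> \<le> (\<Sum>q\<in>Q. 1 / t q)"
  proof (rule sum_mono)
    fix q assume q: "q \<in> Q"
    show "(\<Sum>p\<in>P. x q p) / (t q * B q) \<le> 1 / t q"
    proof (cases "B q = 0")
      case False
      then have "(\<Sum>p\<in>P. x q p) / (t q * B q) \<le> B q / (t q * B q)"
        using B[OF q] t[OF q] budget[OF q] by (intro divide_right_mono) auto
      then show ?thesis using False by simp
    qed (use t[OF q] in simp)
  qed
  finally have "(\<Sum>p\<in>P. excess p) < (\<Sum>p\<in>P. 1)"
    using few by simp
  then obtain p where p: "p \<in> P" "excess p < 1"
    using sum_mono[of P "\<lambda>_. 1" excess] by (meson not_le)
  have "x q p \<le> t q * B q" if q: "q \<in> Q" for q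
  proof (cases "B q = 0")
    case True
    then show ?thesis
      using budget[OF q] member_le_sum[of p P "x q"] p(1) nonneg[OF q] \<open>finite P\<close> by force
  next
    case False
    have "x q p / (t q * B q) \<le> excess p"
      unfolding excess_def using q \<open>finite Q\<close>
    proof (intro member_le_sum)
      show "0 \<le> x r p / (t r * B r)" if "r \<in> Q - {q}" for r
        using that p(1) nonneg B t[of r] by simp
    qed
    with p(2) have "x q p / (t q * B q) < 1" by simp
    moreover have "0 < t q * B q" using False t[OF q] B[OF q] by simp
    ultimately show ?thesis by (simp add: divide_less_eq)
  qed
  with p(1) show ?thesis by blast
qed

text \<open>Indices of the requirements (i), (ii), (iii) of the theorem, and the fraction of its
budget that each one allows.\<close>

datatype 'i sparsity_bound = Single_bound 'i | Total_bound | Pair_bound 'i 'i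

definition sparsity_bounds :: "'i set \<Rightarrow> 'i sparsity_bound set" where
  "sparsity_bounds H =
     insert Total_bound (Single_bound ` H \<union> case_prod Pair_bound ` (SIGMA i:H. H - {i}))"

fun allowance :: "real \<Rightarrow> real \<Rightarrow> 'i sparsity_bound \<Rightarrow> real" where
  "allowance \<delta> \<epsilon> (Single_bound h) = \<delta> / 2"
| "allowance \<delta> \<epsilon> Total_bound = \<epsilon> / 2"
| "allowance \<delta> \<epsilon> (Pair_bound i j) = 1 / 2"

lemma card_off_diagonal:
  assumes "finite H"
  shows "real (card (SIGMA i:H. H - {i})) = real (card H) * (real (card H) - 1)"
proof -
  have "card (SIGMA i:H. H - {i}) = card H * (card H - 1)"
    using assms by (simp add: card_Diff_singleton cong: sum.cong)
  then show ?thesis by (cases "card H") (auto simp: algebra_simps)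
qed

lemma sum_sparsity_bounds_inverse_allowance:
  assumes "finite H"
  shows "(\<Sum>q\<in>sparsity_bounds H. 1 / allowance \<delta> \<epsilon> q)
    = real (card H) * (2 / \<delta>) + 2 / \<epsilon> + 2 * (real (card H) * (real (card H) - 1))"
proof -
  define Off where "Off = (SIGMA i:H. H - {i})"
  have "finite Off" using assms by (simp add: Off_def)
  have "Total_bound \<notin> Single_bound ` H \<union> case_prod Pair_bound ` Off"
    and "Single_bound ` H \<inter> case_prod Pair_bound ` Off = {}" by auto
  then have "(\<Sum>q\<in>sparsity_bounds H. 1 / allowance \<delta> \<epsilon> q)
      = 1 / allowance \<delta> \<epsilon> Total_bound + (\<Sum>q\<in>Single_bound ` H. 1 / allowance \<delta> \<epsilon> q)
        + (\<Sum>q\<in>case_prod Pair_bound ` Off. 1 / allowance \<delta> \<epsilon> q)"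
    unfolding sparsity_bounds_def Off_def[symmetric] using assms \<open>finite Off\<close>
    by (simp add: sum.union_disjoint)
  also have "(\<Sum>q\<in>Single_bound ` H. 1 / allowance \<delta> \<epsilon> q) = real (card H) * (2 / \<delta>)"
    by (simp add: sum.reindex inj_on_def)
  also have "(\<Sum>q\<in>case_prod Pair_bound ` Off. 1 / allowance \<delta> \<epsilon> q) = 2 * real (card Off)"
    by (simp add: sum.reindex inj_on_def case_prod_beta prod_eq_iff)
  finally show ?thesis
    using card_off_diagonal[OF assms] by (simp add: Off_def)
qed

lemma exists_part_sparse_in_sets:
  fixes H :: "'i set" and A :: "'i \<Rightarrow> 'a set" and D :: "'i \<Rightarrow> 'i \<Rightarrow> 'a set"
    and L :: "'p \<Rightarrow> 'a set" and \<delta> \<epsilon> :: real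
  assumes "finite H" "finite P" "disjoint_family_on L P"
    and finite_A: "\<And>h. h \<in> H \<Longrightarrow> finite (A h)"
    and finite_D: "\<And>i j. i \<in> H \<Longrightarrow> j \<in> H \<Longrightarrow> finite (D i j)"
    and "0 < \<delta>" "0 < \<epsilon>"
    and few: "real (card H) * (2 / \<delta>) + 2 / \<epsilon> + 2 * (real (card H) * (real (card H) - 1))
      < real (card P)"
  shows "\<exists>p\<in>P. (\<forall>h\<in>H. real (card (A h \<inter> L p)) \<le> \<delta> / 2 * real (card (A h))) \<and>
    (\<Sum>i\<in>H. \<Sum>j\<in>H - {i}. real (card (D i j \<inter> L p)))
      \<le> \<epsilon> / 2 * (\<Sum>i\<in>H. \<Sum>j\<in>H - {i}. real (card (D i j))) \<and>
    (\<forall>i\<in>H. \<forall>j\<in>H - {i}. real (card (D i j \<inter> L p)) \<le> 1 / 2 * real (card (D i j)))"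
proof -
  define x where "x q p = (case q of
      Single_bound h \<Rightarrow> real (card (A h \<inter> L p))
    | Total_bound \<Rightarrow> (\<Sum>i\<in>H. \<Sum>j\<in>H - {i}. real (card (D i j \<inter> L p)))
    | Pair_bound i j \<Rightarrow> real (card (D i j \<inter> L p)))" for q p
  define B where "B q = (case q of
      Single_bound h \<Rightarrow> real (card (A h))
    | Total_bound \<Rightarrow> (\<Sum>i\<in>H. \<Sum>j\<in>H - {i}. real (card (D i j)))
    | Pair_bound i j \<Rightarrow> real (card (D i j)))" for q
  have spread: "(\<Sum>p\<in>P. real (card (X \<inter> L p))) \<le> real (card X)" if "finite X" for X
    using sum_card_Int_disjoint_family_le[OF that \<open>finite P\<close> \<open>disjoint_family_on L P\<close>]
    by (metis of_nat_le_iff of_nat_sum)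
  have "(\<Sum>p\<in>P. x q p) \<le> B q" if "q \<in> sparsity_bounds H" for q
  proof -
    have "(\<Sum>p\<in>P. \<Sum>i\<in>H. \<Sum>j\<in>H - {i}. real (card (D i j \<inter> L p)))
        = (\<Sum>i\<in>H. \<Sum>j\<in>H - {i}. \<Sum>p\<in>P. real (card (D i j \<inter> L p)))"
      by (simp add: sum.swap[of _ P])
    also have "\<dots> \<le> (\<Sum>i\<in>H. \<Sum>j\<in>H - {i}. real (card (D i j)))"
      using finite_D by (intro sum_mono spread) auto
    finally show ?thesis
      using that finite_A finite_D spread by (auto simp: sparsity_bounds_def x_def B_def)
  qed
  moreover have "finite (sparsity_bounds H)"
    using \<open>finite H\<close> by (simp add: sparsity_bounds_def)
  ultimately obtain p where "p \<in> P"
    and p: "\<forall>q\<in>sparsity_bounds H. x q p \<le> allowance \<delta> \<epsilon> q * B q"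
    using exists_index_within_budgets[of "sparsity_bounds H" P x B "allowance \<delta> \<epsilon>"]
      sum_sparsity_bounds_inverse_allowance[OF \<open>finite H\<close>] few
      \<open>finite P\<close> \<open>0 < \<delta>\<close> \<open>0 < \<epsilon>\<close>
    by (force simp: x_def sparsity_bounds_def intro: sum_nonneg)
  have "real (card (A h \<inter> L p)) \<le> \<delta> / 2 * real (card (A h))" if "h \<in> H" for h
    using p[THEN bspec, of "Single_bound h"] that by (simp add: sparsity_bounds_def x_def B_def)
  moreover have "(\<Sum>i\<in>H. \<Sum>j\<in>H - {i}. real (card (D i j \<inter> L p)))
      \<le> \<epsilon> / 2 * (\<Sum>i\<in>H. \<Sum>j\<in>H - {i}. real (card (D i j)))"
    using p[THEN bspec, of Total_bound] by (simp add: sparsity_bounds_def x_def B_def)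
  moreover have "real (card (D i j \<inter> L p)) \<le> 1 / 2 * real (card (D i j))"
    if "i \<in> H" "j \<in> H - {i}" for i j
  proof -
    have "Pair_bound i j \<in> sparsity_bounds H"
      using that unfolding sparsity_bounds_def
      by (intro insertI2 UnI2 image_eqI[of _ _ "(i, j)"]) auto
    then show ?thesis using p by (auto simp: x_def B_def)
  qed
  ultimately show ?thesis using \<open>p \<in> P\<close> by blast
qed

lemma symdiff_Int_right: "symdiff (A \<inter> L) (B \<inter> L) = symdiff A B \<inter> L"
  by (auto simp: symdiff_def)

lemma Diff_neq_if_card_symdiff_Int_le_half:
  assumes "real (card (symdiff A B \<inter> L)) \<le> 1 / 2 * real (card (symdiff A B))"
    and "0 < card (symdiff A B)"
  shows "A - L \<noteq> B - L"
proof
  assume "A - L = B - L"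
  then have "symdiff A B \<inter> L = symdiff A B" by (auto simp: symdiff_def)
  with assms show False by simp
qed

theorem mainTheorem5:
  fixes V :: "'v set" and E :: "'v set set"
    and pos :: "'v \<Rightarrow> complex" and \<gamma> :: "'v set \<Rightarrow> real \<Rightarrow> complex"
    and c \<delta> \<epsilon> :: real and k l :: nat and S :: "nat \<Rightarrow> 'v set"
  assumes G: "simple_graph V E"
    and emb: "plane_embedding V E pos \<gamma>"
    and c: "0 < c" "c < 1" and \<delta>: "0 < \<delta>" "\<delta> < 1" and \<epsilon>: "0 < \<epsilon>" "\<epsilon> < 1"
    and k: "k \<ge> 1"
    and l: "real l \<ge> 2 * real k ^ 2 + 2 * real k / \<delta> + 2 / \<epsilon> - 1"
    and S: "\<forall>h\<in>{1..k}. c_max_indep V E c (S h)"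
  shows "\<exists>p\<in>{0..l}.
    (\<forall>h\<in>{1..k}. real (card (S h \<inter> stratum V E pos \<gamma> l p)) \<le> (\<delta> / 2) * real (card (S h))) \<and>
    (\<Sum>i\<in>{1..k}. \<Sum>j\<in>{1..k} - {i}.
        real (card (symdiff (S i \<inter> stratum V E pos \<gamma> l p) (S j \<inter> stratum V E pos \<gamma> l p))))
      \<le> (\<epsilon> / 2) * (\<Sum>i\<in>{1..k}. \<Sum>j\<in>{1..k} - {i}. real (card (symdiff (S i) (S j)))) \<and>
    (\<forall>i\<in>{1..k}. \<forall>j\<in>{1..k}. i \<noteq> j \<longrightarrow>
        real (card (symdiff (S i \<inter> stratum V E pos \<gamma> l p) (S j \<inter> stratum V E pos \<gamma> l p)))
          \<le> (1 / 2) * real (card (symdiff (S i) (S j)))) \<and>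
    ((\<forall>i\<in>{1..k}. \<forall>j\<in>{1..k}. i \<noteq> j \<longrightarrow> card (symdiff (S i) (S j)) \<ge> 2) \<longrightarrow>
       (\<forall>i\<in>{1..k}. \<forall>j\<in>{1..k}. i \<noteq> j \<longrightarrow>
          S i - stratum V E pos \<gamma> l p \<noteq> S j - stratum V E pos \<gamma> l p))"
proof -
  have finite_S: "finite (S h)" if "h \<in> {1..k}" for h
  proof (rule finite_subset)
    show "S h \<subseteq> V" using S that by (simp add: c_max_indep_def indep_set_def)
    show "finite V" using G by (simp add: simple_graph_def)
  qed
  have finite_symdiff: "finite (symdiff (S i) (S j))" if "i \<in> {1..k}" "j \<in> {1..k}" for i j
    using finite_S that by (simp add: symdiff_def)
  have few: "real (card {1..k}) * (2 / \<delta>) + 2 / \<epsilon>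
      + 2 * (real (card {1..k}) * (real (card {1..k}) - 1)) < real (card {0..l})"
    using l k by (simp add: power2_eq_square algebra_simps)
  obtain p where "p \<in> {0..l}"
    and p: "\<forall>h\<in>{1..k}. real (card (S h \<inter> stratum V E pos \<gamma> l p)) \<le> \<delta> / 2 * real (card (S h))"
      "(\<Sum>i\<in>{1..k}. \<Sum>j\<in>{1..k} - {i}. real (card (symdiff (S i) (S j) \<inter> stratum V E pos \<gamma> l p)))
        \<le> \<epsilon> / 2 * (\<Sum>i\<in>{1..k}. \<Sum>j\<in>{1..k} - {i}. real (card (symdiff (S i) (S j))))"
      "\<forall>i\<in>{1..k}. \<forall>j\<in>{1..k} - {i}. real (card (symdiff (S i) (S j) \<inter> stratum V E pos \<gamma> l p))
        \<le> 1 / 2 * real (card (symdiff (S i) (S j)))"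
    using exists_part_sparse_in_sets[where A = S and D = "\<lambda>i j. symdiff (S i) (S j)"
        and L = "stratum V E pos \<gamma> l", OF finite_atLeastAtMost finite_atLeastAtMost
        disjoint_family_on_mono[OF subset_UNIV disjoint_family_stratum]
        finite_S finite_symdiff \<delta>(1) \<epsilon>(1) few]
    by blast
  moreover have "S i - stratum V E pos \<gamma> l p \<noteq> S j - stratum V E pos \<gamma> l p"
    if "i \<in> {1..k}" "j \<in> {1..k}" "i \<noteq> j" "card (symdiff (S i) (S j)) \<ge> 2" for i j
    using p(3) that by (intro Diff_neq_if_card_symdiff_Int_le_half) auto
  ultimately show ?thesis
    using \<open>p \<in> {0..l}\<close> unfolding symdiff_Int_right by blast
qed

end
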